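(* Let $X$ be a finite set with similarity function $S$, suppose the target clustering $\mathcal{C}^{\ast}$ satisfies stability with respect to $S$, and suppose the initial clustering has correlation-clustering error $\delta_{cc}$. In the $\eta$-merge model, for any $\eta>2/3$, the interactive algorithm using the global split procedure and the correlation-clustering merge procedure (described below) requires at most $\delta_{cc}$ edit requests to find the target clustering.
   Context: For nonempty $A,A'\subseteq X$, $S(A,A')$ is the average of $S(x,y)$ over $x\in A,y\in A'$. $\mathcal{C}^{\ast}=\{C^{\ast}_1,\dots,C^{\ast}_k\}$ satisfies stability w.r.t. $S$ if for all $i\neq j$, every nonempty proper $A\subset C^{\ast}_i$ and nonempty $A'\subseteq C^{\ast}_j$: $S(A,C^{\ast}_i\setminus A)>S(A,A')$. For a clustering $\mathcal{C}$, $\delta_{cc}=|\{(u,v)\in X\times X: c(u,v)\neq c^{\ast}(u,v)\}|$, where $c(u,v)=1$ if $u,v$ lie in the same cluster of $\mathcal{C}$ and $0$ otherwise, and $c^{\ast}$ is defined likewise for $\mathcal{C}^{\ast}$. Average-linkage tree $T_{glob}$: leaves are singletons; repeatedly merge the two current nodes $N_1,N_2$ with largest $S(N_1,N_2)$ (ties arbitrary) into parent $N_1\cup N_2$ until the root $X$ remains. Process ($\eta$-merge model): starting from the initial clustering, an oracle repeatedly issues split$(C_i)$ (only if current cluster $C_i$ contains points from two or more target clusters) or merge$(C_i,C_j)$ for distinct current clusters (only if some target cluster $C^{\ast}_l$ has $|C_i\cap C^{\ast}_l|\ge\eta|C_i|$ and $|C_j\cap C^{\ast}_l|\ge\eta|C_j|$).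 Split procedure: let $N$ be the deepest node of $T_{glob}$ containing $C_i$, with children $N_1,N_2$; replace $C_i$ by $C_i\cap N_1$ and $C_i\cap N_2$. Correlation-clustering merge procedure: find a node $N$ of $T_{glob}$ of maximal depth with $|N\cap C_i|\ge\eta|C_i|$ and $|N\cap C_j|\ge\eta|C_j|$; if $|C_i|\ge|C_j|$, replace $C_i$ by $C_i\cup(N\cap C_j)$ and $C_j$ by $C_j\setminus N$; otherwise replace $C_i$ by $C_i\setminus N$ and $C_j$ by $C_j\cup(N\cap C_i)$ (empty clusters are discarded). The bound is on the number of requests before the current clustering equals $\mathcal{C}^{\ast}$, for any sequence of allowed requests. *)

theory Defs
  imports Complex_Main
begin

definition avg_sim :: "('a \<Rightarrow> 'a \<Rightarrow> real) \<Rightarrow> 'a set \<Rightarrow> 'a set \<Rightarrow> real" where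
  "avg_sim S A B = (\<Sum>x\<in>A. \<Sum>y\<in>B. S x y) / (real (card A) * real (card B))"

definition is_clustering :: "'a set \<Rightarrow> 'a set set \<Rightarrow> bool" where
  "is_clustering X P \<longleftrightarrow> \<Union>P = X \<and> {} \<notin> P \<and>
     (\<forall>A\<in>P. \<forall>B\<in>P. A \<noteq> B \<longrightarrow> A \<inter> B = {})"

definition target_stable :: "('a \<Rightarrow> 'a \<Rightarrow> real) \<Rightarrow> 'a set set \<Rightarrow> bool" where
  "target_stable S Cs \<longleftrightarrow> (\<forall>Ci\<in>Cs. \<forall>Cj\<in>Cs. Ci \<noteq> Cj \<longrightarrow>
     (\<forall>A A'. A \<noteq> {} \<and> A \<subset> Ci \<and> A' \<noteq> {} \<and> A' \<subseteq> Cj \<longrightarrow>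
        avg_sim S A (Ci - A) > avg_sim S A A'))"

definition same_cluster :: "'a set set \<Rightarrow> 'a \<Rightarrow> 'a \<Rightarrow> bool" where
  "same_cluster P u v \<longleftrightarrow> (\<exists>C\<in>P. u \<in> C \<and> v \<in> C)"

text \<open>Correlation-clustering error (ordered pairs).\<close>
definition delta_cc :: "'a set \<Rightarrow> 'a set set \<Rightarrow> 'a set set \<Rightarrow> nat" where
  "delta_cc X P Q = card {(u,v) \<in> X \<times> X. same_cluster P u v \<noteq> same_cluster Q u v}"

text \<open>An average-linkage tree is represented by the sequence of partitions Ps produced by the
  merging process: Ps!0 are the singletons, the last entry is {X}, and each step merges two
  distinct current nodes of maximal average similarity (ties broken arbitrarily).\<close>
definition avg_linkage_run :: "('a \<Rightarrow> 'a \<Rightarrow> real) \<Rightarrow> 'a set \<Rightarrow> 'a set set list \<Rightarrow> bool" where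
  "avg_linkage_run S X Ps \<longleftrightarrow> Ps \<noteq> [] \<and> hd Ps = (\<lambda>x. {x}) ` X \<and> last Ps = {X} \<and>
     (\<forall>i. Suc i < length Ps \<longrightarrow>
        (\<exists>N1 N2. N1 \<in> Ps!i \<and> N2 \<in> Ps!i \<and> N1 \<noteq> N2 \<and>
           Ps!(Suc i) = insert (N1 \<union> N2) (Ps!i - {N1, N2}) \<and>
           (\<forall>M1\<in>Ps!i. \<forall>M2\<in>Ps!i. M1 \<noteq> M2 \<longrightarrow> avg_sim S M1 M2 \<le> avg_sim S N1 N2)))"

definition tree_nodes :: "'a set set list \<Rightarrow> 'a set set" where
  "tree_nodes Ps = \<Union>(set Ps)"

definition tree_children :: "'a set set list \<Rightarrow> 'a set \<Rightarrow> 'a set \<Rightarrow> 'a set \<Rightarrow> bool" where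
  "tree_children Ps N N1 N2 \<longleftrightarrow> (\<exists>i. Suc i < length Ps \<and> N1 \<in> Ps!i \<and> N2 \<in> Ps!i \<and> N1 \<noteq> N2 \<and>
     N = N1 \<union> N2 \<and> Ps!(Suc i) = insert N (Ps!i - {N1, N2}))"

definition node_depth :: "'a set set list \<Rightarrow> 'a set \<Rightarrow> nat" where
  "node_depth Ps N = card {M \<in> tree_nodes Ps. N \<subset> M}"

definition deepest_containing :: "'a set set list \<Rightarrow> 'a set \<Rightarrow> 'a set \<Rightarrow> bool" where
  "deepest_containing Ps C N \<longleftrightarrow> N \<in> tree_nodes Ps \<and> C \<subseteq> N \<and>
     (\<forall>M\<in>tree_nodes Ps. C \<subseteq> M \<longrightarrow> node_depth Ps M \<le> node_depth Ps N)"

definition eta_ok :: "real \<Rightarrow> 'a set \<Rightarrow> 'a set \<Rightarrow> bool" where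
  "eta_ok eta N C \<longleftrightarrow> real (card (N \<inter> C)) \<ge> eta * real (card C)"

text \<open>Split request (allowed only for impure clusters) with the global split procedure.\<close>
definition split_step :: "'a set set list \<Rightarrow> 'a set set \<Rightarrow> 'a set set \<Rightarrow> 'a set set \<Rightarrow> bool" where
  "split_step Ps Cstar P P' \<longleftrightarrow> (\<exists>Ci\<in>P.
     (\<exists>l1\<in>Cstar. \<exists>l2\<in>Cstar. l1 \<noteq> l2 \<and> Ci \<inter> l1 \<noteq> {} \<and> Ci \<inter> l2 \<noteq> {}) \<and>
     (\<exists>N N1 N2. deepest_containing Ps Ci N \<and> tree_children Ps N N1 N2 \<and>
        P' = (P - {Ci}) \<union> ({Ci \<inter> N1, Ci \<inter> N2} - {{}})))"

text \<open>Merge request (allowed in the eta-merge model) with the correlation-clustering merge procedure.\<close>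
definition merge_step :: "real \<Rightarrow> 'a set set list \<Rightarrow> 'a set set \<Rightarrow> 'a set set \<Rightarrow> 'a set set \<Rightarrow> bool" where
  "merge_step eta Ps Cstar P P' \<longleftrightarrow> (\<exists>Ci\<in>P. \<exists>Cj\<in>P. Ci \<noteq> Cj \<and>
     (\<exists>l\<in>Cstar. eta_ok eta l Ci \<and> eta_ok eta l Cj) \<and>
     (\<exists>N. N \<in> tree_nodes Ps \<and> eta_ok eta N Ci \<and> eta_ok eta N Cj \<and>
        (\<forall>M\<in>tree_nodes Ps. eta_ok eta M Ci \<and> eta_ok eta M Cj \<longrightarrow> node_depth Ps M \<le> node_depth Ps N) \<and>
        P' = (if card Ci \<ge> card Cj
              then (P - {Ci, Cj}) \<union> ({Ci \<union> (N \<inter> Cj), Cj - N} - {{}})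
              else (P - {Ci, Cj}) \<union> ({Ci - N, Cj \<union> (N \<inter> Ci)} - {{}}))))"

definition edit_step :: "real \<Rightarrow> 'a set set list \<Rightarrow> 'a set set \<Rightarrow> 'a set set \<Rightarrow> 'a set set \<Rightarrow> bool" where
  "edit_step eta Ps Cstar P P' \<longleftrightarrow> split_step Ps Cstar P P' \<or> merge_step eta Ps Cstar P P'"

end

theory Submission
  imports Defs
begin

text \<open>Every node of the average-linkage tree is laminar with respect to the target clustering:
  were two nodes merged, one lying strictly inside a target cluster \<open>T\<close> and one outside \<open>T\<close>,
  stability would give the first a more similar partner among the nodes making up the rest of \<open>T\<close>.
  Hence each target cluster is a tree node, and every request strictly decreases \<open>\<delta>\<^sub>c\<^sub>c\<close>.
  A split cuts the impure cluster along the children of the deepest node containing it; both parts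
  are nonempty and, by laminarity, no target cluster meets both, so only wrongly joined pairs are
  separated. For a merge, the deepest node \<open>N\<close> that \<open>\<eta>\<close>-overlaps both clusters lies inside their
  common target cluster \<open>l\<close> (\<open>\<eta> > 1/2\<close> forces \<open>N \<inter> l \<noteq> {}\<close>, and \<open>l \<subset> N\<close> would contradict
  maximal depth); moving the points of \<open>N\<close> into the larger cluster only changes pairs between
  moved and unmoved points, and \<open>\<eta> > 2/3\<close> makes this a net gain.\<close>

section \<open>Clusterings\<close>

definition laminar_wrt :: "'a set set \<Rightarrow> 'a set \<Rightarrow> bool" where
  "laminar_wrt Cs N \<longleftrightarrow> (\<forall>T\<in>Cs. N \<inter> T = {} \<or> N \<subseteq> T \<or> T \<subseteq> N)"

lemma clustering_subset: "is_clustering X P \<Longrightarrow> C \<in> P \<Longrightarrow> C \<subseteq> X"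
  unfolding is_clustering_def by blast

lemma clustering_nonempty: "is_clustering X P \<Longrightarrow> C \<in> P \<Longrightarrow> C \<noteq> {}"
  unfolding is_clustering_def by blast

lemma clustering_cover: "is_clustering X P \<Longrightarrow> x \<in> X \<Longrightarrow> \<exists>C\<in>P. x \<in> C"
  unfolding is_clustering_def by blast

lemma clustering_disjoint:
  "is_clustering X P \<Longrightarrow> A \<in> P \<Longrightarrow> B \<in> P \<Longrightarrow> A \<noteq> B \<Longrightarrow> A \<inter> B = {}"
  unfolding is_clustering_def by blast

lemma finite_clustering: "finite X \<Longrightarrow> is_clustering X P \<Longrightarrow> finite P"
  by (rule finite_subset[of P "Pow X"]) (auto dest: clustering_subset)

lemma finite_cluster: "finite X \<Longrightarrow> is_clustering X P \<Longrightarrow> C \<in> P \<Longrightarrow> finite C"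
  by (meson clustering_subset finite_subset)

lemma same_cluster_iff:
  "is_clustering X P \<Longrightarrow> C \<in> P \<Longrightarrow> u \<in> C \<Longrightarrow> same_cluster P u v \<longleftrightarrow> v \<in> C"
  unfolding is_clustering_def same_cluster_def by blast

lemma same_cluster_commute: "same_cluster P u v = same_cluster P v u"
  unfolding same_cluster_def by blast

lemma clustering_merge:
  assumes P: "is_clustering X P" and N: "N1 \<in> P" "N2 \<in> P" "N1 \<noteq> N2"
  shows "is_clustering X (insert (N1 \<union> N2) (P - {N1, N2}))"
  unfolding is_clustering_def
proof (intro conjI ballI impI)
  have "\<Union>(insert (N1 \<union> N2) (P - {N1, N2})) = \<Union>P"
    using N by auto
  then show "\<Union>(insert (N1 \<union> N2) (P - {N1, N2})) = X"
    using P unfolding is_clustering_def by simp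
  show "{} \<notin> insert (N1 \<union> N2) (P - {N1, N2})"
    using clustering_nonempty[OF P] N by auto
  fix A B assume "A \<in> insert (N1 \<union> N2) (P - {N1, N2})" "B \<in> insert (N1 \<union> N2) (P - {N1, N2})" "A \<noteq> B"
  then consider "A = N1 \<union> N2" "B \<in> P - {N1, N2}" | "B = N1 \<union> N2" "A \<in> P - {N1, N2}"
    | "A \<in> P" "B \<in> P" "A \<noteq> B"
    by auto
  then show "A \<inter> B = {}"
  proof cases
    case 1
    then show ?thesis using clustering_disjoint[OF P _ N(1)] clustering_disjoint[OF P _ N(2)] by blast
  next
    case 2
    then show ?thesis using clustering_disjoint[OF P _ N(1)] clustering_disjoint[OF P _ N(2)] by blast
  qed (rule clustering_disjoint[OF P])
qed

lemma clustering_split: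
  assumes P: "is_clustering X P" and C: "C \<in> P"
    and AB: "A \<union> B = C" "A \<inter> B = {}" "A \<noteq> {}" "B \<noteq> {}"
  shows "is_clustering X (insert A (insert B (P - {C})))"
  unfolding is_clustering_def
proof (intro conjI ballI impI)
  have "\<Union>(insert A (insert B (P - {C}))) = \<Union>P"
    using C AB(1) by blast
  then show "\<Union>(insert A (insert B (P - {C}))) = X"
    using P unfolding is_clustering_def by simp
  show "{} \<notin> insert A (insert B (P - {C}))"
    using clustering_nonempty[OF P] AB(3,4) by auto
  have outside: "D \<inter> A = {} \<and> D \<inter> B = {}" if "D \<in> P - {C}" for D
    using clustering_disjoint[OF P _ C] that AB(1) by blast
  fix D E assume "D \<in> insert A (insert B (P - {C}))" "E \<in> insert A (insert B (P - {C}))" "D \<noteq> E"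
  then consider "D \<in> P - {C}" "E \<in> P - {C}" | "D \<in> P - {C}" "E \<in> {A, B}"
    | "E \<in> P - {C}" "D \<in> {A, B}" | "D \<in> {A, B}" "E \<in> {A, B}"
    by blast
  then show "D \<inter> E = {}"
  proof cases
    case 1
    then show ?thesis using clustering_disjoint[OF P] \<open>D \<noteq> E\<close> by blast
  next
    case 2
    then show ?thesis using outside by blast
  next
    case 3
    then show ?thesis using outside by blast
  next
    case 4
    then show ?thesis using AB(2) \<open>D \<noteq> E\<close> by blast
  qed
qed

lemma same_cluster_split:
  assumes P: "is_clustering X P" and C: "C \<in> P"
    and AB: "A \<union> B = C" "A \<inter> B = {}"
  shows "same_cluster (insert A (insert B (P - {C}))) u v \<longleftrightarrow>
    same_cluster P u v \<and> \<not> (u \<in> A \<and> v \<in> B \<or> u \<in> B \<and> v \<in> A)"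
    (is "?lhs \<longleftrightarrow> ?rhs")
proof
  have outside: "D \<inter> C = {}" if "D \<in> P - {C}" for D
    using clustering_disjoint[OF P _ C] that by blast
  assume ?lhs
  then obtain D where D: "D \<in> insert A (insert B (P - {C}))" "u \<in> D" "v \<in> D"
    unfolding same_cluster_def by blast
  then consider "D = A" | "D = B" | "D \<in> P - {C}" by blast
  then show ?rhs
  proof cases
    case 3
    then show ?thesis using D outside AB(1) unfolding same_cluster_def by blast
  qed (use D C AB in \<open>auto simp: same_cluster_def\<close>)
next
  assume ?rhs
  then obtain D where D: "D \<in> P" "u \<in> D" "v \<in> D"
    and uncut: "\<not> (u \<in> A \<and> v \<in> B \<or> u \<in> B \<and> v \<in> A)"
    unfolding same_cluster_def by blast
  show ?lhs
  proof (cases "D = C")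
    case True
    then have "u \<in> A \<and> v \<in> A \<or> u \<in> B \<and> v \<in> B" using D uncut AB(1) by blast
    then show ?thesis unfolding same_cluster_def by blast
  next
    case False
    then show ?thesis using D unfolding same_cluster_def by blast
  qed
qed


lemma clustering_move:
  assumes P: "is_clustering X P" and AB: "A \<in> P" "B \<in> P" "A \<noteq> B" and M: "M \<subseteq> B"
  shows "is_clustering X ((P - {A, B}) \<union> ({A \<union> M, B - M} - {{}}))"
  unfolding is_clustering_def
proof (intro conjI ballI impI)
  let ?P' = "(P - {A, B}) \<union> ({A \<union> M, B - M} - {{}})"
  have "\<Union>({A \<union> M, B - M} - {{}}) = A \<union> B" using M by auto
  moreover have "\<Union>P = \<Union>(P - {A, B}) \<union> A \<union> B" using AB(1,2) by blast
  ultimately show "\<Union>?P' = X" using P unfolding is_clustering_def by auto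
  have "{} \<notin> P" using clustering_nonempty[OF P] by blast
  then show "{} \<notin> ?P'" by simp
  have dAB: "A \<inter> B = {}" using clustering_disjoint[OF P AB] .
  have outside: "D \<inter> (A \<union> M) = {} \<and> D \<inter> (B - M) = {}" if "D \<in> P - {A, B}" for D
  proof -
    have D: "D \<in> P" "D \<noteq> A" "D \<noteq> B" using that by auto
    have "D \<inter> A = {}" "D \<inter> B = {}"
      using clustering_disjoint[OF P D(1) AB(1) D(2)] clustering_disjoint[OF P D(1) AB(2) D(3)] .
    then show ?thesis using M by blast
  qed
  fix D E assume "D \<in> ?P'" "E \<in> ?P'" "D \<noteq> E"
  then consider "D \<in> P - {A, B}" "E \<in> P - {A, B}" | "D \<in> P - {A, B}" "E \<in> {A \<union> M, B - M}"
    | "E \<in> P - {A, B}" "D \<in> {A \<union> M, B - M}" | "D \<in> {A \<union> M, B - M}" "E \<in> {A \<union> M, B - M}"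
    by (simp only: Un_iff Diff_iff) meson
  then show "D \<inter> E = {}"
  proof cases
    case 1
    then show ?thesis using clustering_disjoint[OF P] \<open>D \<noteq> E\<close> by blast
  next
    case 2
    then show ?thesis using outside by blast
  next
    case 3
    then show ?thesis using outside by blast
  next
    case 4
    then show ?thesis using dAB \<open>D \<noteq> E\<close> by blast
  qed
qed

lemma same_cluster_move:
  assumes P: "is_clustering X P" and AB: "A \<in> P" "B \<in> P" "A \<noteq> B" and M: "M \<subseteq> B"
  defines "P' \<equiv> (P - {A, B}) \<union> ({A \<union> M, B - M} - {{}})"
  shows same_cluster_move_moved: "u \<in> M \<Longrightarrow> same_cluster P' u v \<longleftrightarrow> v \<in> A \<union> M"
    and same_cluster_move_unmoved:
      "u \<in> X \<Longrightarrow> u \<notin> M \<Longrightarrow> v \<notin> M \<Longrightarrow> same_cluster P' u v \<longleftrightarrow> same_cluster P u v"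
proof -
  have P': "is_clustering X P'" unfolding P'_def using clustering_move[OF P AB M] .
  have AM: "A \<union> M \<in> P'" unfolding P'_def using clustering_nonempty[OF P AB(1)] by simp
  show "u \<in> M \<Longrightarrow> same_cluster P' u v \<longleftrightarrow> v \<in> A \<union> M"
    using same_cluster_iff[OF P' AM] by blast
  assume u: "u \<in> X" "u \<notin> M" and v: "v \<notin> M"
  obtain D where D: "D \<in> P" "u \<in> D" using clustering_cover[OF P u(1)] by blast
  consider "D = A" | "D = B" | "D \<in> P - {A, B}" using D(1) by blast
  then show "same_cluster P' u v \<longleftrightarrow> same_cluster P u v"
  proof cases
    case 1
    then show ?thesis using same_cluster_iff[OF P' AM] same_cluster_iff[OF P D] D(2) v by auto
  next
    case 2
    then have "B - M \<in> P'" using D(2) u(2) unfolding P'_def by auto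
    then show ?thesis using 2 same_cluster_iff[OF P' _] same_cluster_iff[OF P D] D(2) u(2) v by auto
  next
    case 3
    then have "D \<in> P'" unfolding P'_def by simp
    then show ?thesis using same_cluster_iff[OF P' _] same_cluster_iff[OF P D] D(2) by auto
  qed
qed

section \<open>Average similarity and stability\<close>

lemma avg_sim_less_iff:
  assumes "finite A" "A \<noteq> {}" "finite B" "B \<noteq> {}"
  shows "avg_sim S A B < a \<longleftrightarrow> (\<Sum>y\<in>B. \<Sum>x\<in>A. S x y) < a * card A * card B"
proof -
  have "real (card A) * real (card B) > 0"
    using assms by (simp add: card_gt_0_iff)
  then show ?thesis
    unfolding avg_sim_def by (subst sum.swap) (simp add: divide_less_eq mult_ac)
qed

lemma avg_sim_commute:
  assumes "\<forall>x\<in>X. \<forall>y\<in>X. S x y = S y x" "A \<subseteq> X" "B \<subseteq> X"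
  shows "avg_sim S A B = avg_sim S B A"
proof -
  have "(\<Sum>x\<in>A. \<Sum>y\<in>B. S x y) = (\<Sum>y\<in>B. \<Sum>x\<in>A. S y x)"
    using assms by (subst sum.swap) (intro sum.cong refl; blast)
  then show ?thesis unfolding avg_sim_def by (simp add: mult.commute)
qed

text \<open>Averages over a disjoint union are weighted averages of the averages over the parts.\<close>
lemma avg_sim_Union_less:
  assumes A: "finite A" "A \<noteq> {}" and K: "finite K" "K \<noteq> {}" "pairwise disjnt K"
    and parts: "\<And>B. B \<in> K \<Longrightarrow> finite B \<and> B \<noteq> {}"
    and less: "\<And>B. B \<in> K \<Longrightarrow> avg_sim S A B < a"
  shows "avg_sim S A (\<Union>K) < a"
proof -
  define h where "h y = (\<Sum>x\<in>A. S x y)" for y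
  have fin: "finite (\<Union>K)" and ne: "\<Union>K \<noteq> {}"
    using K parts by auto
  have "(\<Sum>y\<in>\<Union>K. h y) = (\<Sum>B\<in>K. \<Sum>y\<in>B. h y)"
    using sum.Union_disjoint[of K h] K(3) parts unfolding pairwise_def disjnt_def by simp
  also have "\<dots> < (\<Sum>B\<in>K. a * card A * card B)"
    using K less parts avg_sim_less_iff[OF A] unfolding h_def by (intro sum_strict_mono) auto
  also have "\<dots> = a * card A * card (\<Union>K)"
    using K parts by (simp add: card_Union_disjoint sum_distrib_left)
  finally show ?thesis
    using avg_sim_less_iff[OF A fin ne] unfolding h_def by simp
qed

text \<open>Stability at work: a node strictly inside a target cluster \<open>T\<close> is, on average, more similar
  to the rest of \<open>T\<close> than to any node outside \<open>T\<close>; and the rest of \<open>T\<close> is a union of nodes.\<close>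
lemma stable_better_partner:
  assumes "finite X" and target: "is_clustering X Cstar" "target_stable S Cstar"
    and P: "is_clustering X P" "\<forall>N\<in>P. laminar_wrt Cstar N"
    and N: "N1 \<in> P" "N2 \<in> P" and T: "T \<in> Cstar" "N1 \<subset> T" "N2 \<inter> T = {}"
  shows "\<exists>N\<in>P. N \<noteq> N1 \<and> avg_sim S N1 N2 < avg_sim S N1 N"
proof (rule ccontr)
  assume "\<not> ?thesis"
  then have le: "avg_sim S N1 N \<le> avg_sim S N1 N2" if "N \<in> P" "N \<noteq> N1" for N
    using that by fastforce
  define a where "a = avg_sim S N1 (T - N1)"
  have N1: "finite N1" "N1 \<noteq> {}"
    using finite_cluster[OF \<open>finite X\<close> P(1) N(1)] clustering_nonempty[OF P(1) N(1)] .
  have N2: "finite N2" "N2 \<noteq> {}"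
    using finite_cluster[OF \<open>finite X\<close> P(1) N(2)] clustering_nonempty[OF P(1) N(2)] .
  have "avg_sim S N1 (\<Union>y\<in>N2. {y}) < a"
  proof (rule avg_sim_Union_less[OF N1])
    fix B assume "B \<in> (\<lambda>y. {y}) ` N2"
    then obtain y where B: "B = {y}" and y: "y \<in> N2" by blast
    obtain Tj where "Tj \<in> Cstar" "y \<in> Tj"
      using clustering_cover[OF target(1)] clustering_subset[OF P(1) N(2)] y by blast
    moreover have "Tj \<noteq> T" using T(3) y \<open>y \<in> Tj\<close> by blast
    ultimately show "avg_sim S N1 B < a"
      using target(2) T N1(2) unfolding target_stable_def a_def B by blast
  qed (use N2 in \<open>auto simp: pairwise_def disjnt_def\<close>)
  then have N2a: "avg_sim S N1 N2 < a" by simp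
  define K where "K = {N \<in> P. N \<subseteq> T - N1}"
  have "T - N1 \<subseteq> \<Union>K"
  proof
    fix y assume y: "y \<in> T - N1"
    then obtain N where N': "N \<in> P" "y \<in> N"
      using clustering_cover[OF P(1)] clustering_subset[OF target(1) T(1)] by blast
    then have "N \<inter> N1 = {}" using clustering_disjoint[OF P(1) _ N(1)] y by blast
    moreover have "N \<inter> T = {} \<or> N \<subseteq> T \<or> T \<subseteq> N"
      using P(2) N' T(1) unfolding laminar_wrt_def by blast
    ultimately show "y \<in> \<Union>K" using N' y T(2) N1(2) unfolding K_def by blast
  qed
  then have UK: "\<Union>K = T - N1" unfolding K_def by blast
  have "avg_sim S N1 (\<Union>K) < a"
  proof (rule avg_sim_Union_less[OF N1])
    show "finite K" using finite_clustering[OF \<open>finite X\<close> P(1)] unfolding K_def by simp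
    show "K \<noteq> {}" using UK T(2) by blast
    show "pairwise disjnt K"
      using clustering_disjoint[OF P(1)] unfolding K_def pairwise_def disjnt_def by blast
    fix B assume "B \<in> K"
    then have "B \<in> P" "B \<subseteq> T - N1" unfolding K_def by auto
    moreover from this have "B \<noteq> {}" using clustering_nonempty[OF P(1)] by blast
    ultimately show "finite B \<and> B \<noteq> {}" "avg_sim S N1 B < a"
      using finite_cluster[OF \<open>finite X\<close> P(1)] le N2a by fastforce+
  qed
  then show False using UK unfolding a_def by simp
qed

section \<open>Correlation-clustering errors\<close>

definition cc_errors :: "'a set \<Rightarrow> 'a set set \<Rightarrow> 'a set set \<Rightarrow> ('a \<times> 'a) set" where
  "cc_errors X P Q = {(u, v) \<in> X \<times> X. same_cluster P u v \<noteq> same_cluster Q u v}"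

lemma delta_cc_eq_card_cc_errors: "delta_cc X P Q = card (cc_errors X P Q)"
  unfolding delta_cc_def cc_errors_def by simp

lemma finite_cc_errors: "finite X \<Longrightarrow> finite (cc_errors X P Q)"
  unfolding cc_errors_def by (rule finite_subset[of _ "X \<times> X"]) auto

lemma delta_cc_split_less:
  assumes "finite X" and P: "is_clustering X P" and C: "C \<in> P"
    and AB: "A \<union> B = C" "A \<inter> B = {}" "A \<noteq> {}" "B \<noteq> {}"
    and apart: "\<forall>u\<in>A. \<forall>v\<in>B. \<not> same_cluster Q u v"
  shows "delta_cc X (insert A (insert B (P - {C}))) Q < delta_cc X P Q"
proof -
  let ?P' = "insert A (insert B (P - {C}))"
  have apart': "\<not> same_cluster Q u v" if "u \<in> A \<and> v \<in> B \<or> u \<in> B \<and> v \<in> A" for u v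
    using apart that same_cluster_commute[of Q] by blast
  have "cc_errors X ?P' Q \<subset> cc_errors X P Q"
  proof
    show "cc_errors X ?P' Q \<subseteq> cc_errors X P Q"
      unfolding cc_errors_def same_cluster_split[OF P C AB(1,2)] using apart' by blast
    obtain u v where uv: "u \<in> A" "v \<in> B" using AB(3,4) by blast
    then have "u \<in> X" "v \<in> X" "same_cluster P u v"
      using clustering_subset[OF P C] C AB(1) unfolding same_cluster_def by blast+
    then have "(u, v) \<in> cc_errors X P Q - cc_errors X ?P' Q"
      using uv apart' unfolding cc_errors_def same_cluster_split[OF P C AB(1,2)] by auto
    then show "cc_errors X ?P' Q \<noteq> cc_errors X P Q" by blast
  qed
  then show ?thesis
    unfolding delta_cc_eq_card_cc_errors by (rule psubset_card_mono[OF finite_cc_errors[OF \<open>finite X\<close>]])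
qed

lemma card_less_by_crossing_blocks:
  fixes E E' :: "('a \<times> 'a) set"
  assumes fin: "finite E" "finite E'" and M: "finite M" "M \<noteq> {}" "M \<inter> Y = {}"
    and same: "E - (M \<times> Y \<union> Y \<times> M) = E' - (M \<times> Y \<union> Y \<times> M)"
    and blocks: "E \<inter> M \<times> Y = M \<times> F" "E \<inter> Y \<times> M = F \<times> M"
      "E' \<inter> M \<times> Y = M \<times> F'" "E' \<inter> Y \<times> M = F' \<times> M"
    and less: "card F' < card F"
  shows "card E' < card E"
proof -
  have split: "card G = card (G - (M \<times> Y \<union> Y \<times> M)) + card (G \<inter> M \<times> Y) + card (G \<inter> Y \<times> M)"
    if "finite G" for G :: "('a \<times> 'a) set"
  proof -
    have "G \<inter> (M \<times> Y \<union> Y \<times> M) = (G \<inter> M \<times> Y) \<union> (G \<inter> Y \<times> M)" by blast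
    moreover have "(G \<inter> M \<times> Y) \<inter> (G \<inter> Y \<times> M) = {}" using M(3) by blast
    ultimately have "card (G \<inter> (M \<times> Y \<union> Y \<times> M)) = card (G \<inter> M \<times> Y) + card (G \<inter> Y \<times> M)"
      using that by (simp add: card_Un_disjoint)
    then show ?thesis using card_Int_Diff[OF that, of "M \<times> Y \<union> Y \<times> M"] by simp
  qed
  let ?Q = "M \<times> Y \<union> Y \<times> M"
  have "card E = card (E - ?Q) + card M * card F + card M * card F"
    using split[OF fin(1)] blocks(1,2) by (simp add: card_cartesian_product mult.commute)
  moreover have "card E' = card (E - ?Q) + card M * card F' + card M * card F'"
    using split[OF fin(2)] blocks(3,4) same by (simp add: card_cartesian_product mult.commute)
  moreover have "card M * card F' < card M * card F" using M less by (simp add: card_gt_0_iff)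
  ultimately show ?thesis by linarith
qed

text \<open>Moving \<open>M\<close> into the larger cluster \<open>A\<close> changes, for a point of \<open>M\<close>, its set of
  misclassified partners outside \<open>M\<close> from the right-hand to the left-hand set. This is where
  \<open>\<eta> > 2/3\<close> is needed: \<open>|A - l| + |B - M| \<le> 2 (1 - \<eta>) |A| < \<eta> |A| \<le> |A \<inter> l|\<close>.\<close>
lemma card_errors_move_less:
  assumes X: "finite X" "A \<subseteq> X" "B \<subseteq> X" "l \<subseteq> X" and AB: "A \<inter> B = {}" "A \<noteq> {}"
    and M: "M \<subseteq> B" "M \<subseteq> l" and size: "card B \<le> card A"
    and eta: "eta > 2/3" "eta_ok eta l A" "eta_ok eta M B"
  shows "card {v \<in> X - M. (v \<in> A \<union> M) \<noteq> (v \<in> l)} < card {v \<in> X - M. (v \<in> B) \<noteq> (v \<in> l)}"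
proof -
  have fin: "finite A" "finite B" "finite l" using X finite_subset by blast+
  have "real (card A) > 0" using fin(1) AB(2) by (simp add: card_gt_0_iff)
  have lA: "eta * card A \<le> card (l \<inter> A)" and MB: "eta * card B \<le> card M"
    using eta(2,3) M(1) unfolding eta_ok_def by (simp_all add: Int_absorb1 Int_commute)
  have A_split: "card (A - l) + card (l \<inter> A) = card A"
    using card_Int_Diff[OF fin(1), of l] by (simp add: Int_commute)
  have B_split: "card (B - M) + card M = card B"
    using card_Diff_subset[OF finite_subset[OF M(1) fin(2)] M(1)] card_mono[OF fin(2) M(1)] by simp
  have "eta * card A \<le> 1 * card A" using lA card_mono[OF fin(1) Int_lower2, of l] by linarith
  then have "eta \<le> 1" using \<open>real (card A) > 0\<close> by simp
  then have "(1 - eta) * card B \<le> (1 - eta) * card A" using size by (intro mult_left_mono) auto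
  moreover have "(3 * eta - 2) * card A > 0" using eta(1) \<open>real (card A) > 0\<close> by simp
  ultimately have small: "card (A - l) + card (B - M) < card (l \<inter> A)"
    using A_split B_split lA MB by (simp add: algebra_simps)
  have "card {v \<in> X - M. (v \<in> A \<union> M) \<noteq> (v \<in> l)} \<le> card ((A - l) \<union> (B - M) \<union> (l - A - B))"
    using fin by (intro card_mono) auto
  also have "\<dots> \<le> card (A - l) + card (B - M) + card (l - A - B)"
    by (metis add_le_mono1 card_Un_le order_trans)
  also have "\<dots> < card (l \<inter> A) + card (l - A - B)" using small by simp
  also have "\<dots> = card ((l \<inter> A) \<union> (l - A - B))"
    using fin by (intro card_Un_disjoint[symmetric]) auto
  also have "\<dots> \<le> card {v \<in> X - M. (v \<in> B) \<noteq> (v \<in> l)}"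
    using X AB M by (intro card_mono) auto
  finally show ?thesis .
qed

lemma delta_cc_move_less:
  assumes "finite X" and Q: "is_clustering X Q" and P: "is_clustering X P"
    and AB: "A \<in> P" "B \<in> P" "A \<noteq> B" and size: "card B \<le> card A"
    and l: "l \<in> Q" and M: "M \<subseteq> B" "M \<subseteq> l"
    and eta: "eta > 2/3" "eta_ok eta l A" "eta_ok eta M B"
  shows "delta_cc X ((P - {A, B}) \<union> ({A \<union> M, B - M} - {{}})) Q < delta_cc X P Q"
proof -
  define P' where "P' = (P - {A, B}) \<union> ({A \<union> M, B - M} - {{}})"
  define F where "F = {v \<in> X - M. (v \<in> B) \<noteq> (v \<in> l)}"
  define F' where "F' = {v \<in> X - M. (v \<in> A \<union> M) \<noteq> (v \<in> l)}"
  have X: "A \<subseteq> X" "B \<subseteq> X" "l \<subseteq> X" "M \<subseteq> X"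
    using clustering_subset[OF P AB(1)] clustering_subset[OF P AB(2)] clustering_subset[OF Q l] M(1)
    by auto
  have "finite B" "B \<noteq> {}" using X(2) \<open>finite X\<close> clustering_nonempty[OF P AB(2)] finite_subset by auto
  then have "0 < eta * card B" using eta(1) by (simp add: card_gt_0_iff)
  then have "M \<noteq> {}" using eta(3) unfolding eta_ok_def by auto
  have moved: "same_cluster P u v \<longleftrightarrow> v \<in> B" "same_cluster P' u v \<longleftrightarrow> v \<in> A \<union> M"
    "same_cluster Q u v \<longleftrightarrow> v \<in> l" if "u \<in> M" for u v
    using same_cluster_iff[OF P AB(2)] same_cluster_move_moved[OF P AB M(1) that]
      same_cluster_iff[OF Q l] that M unfolding P'_def by blast+
  have moved': "same_cluster P v u \<longleftrightarrow> v \<in> B" "same_cluster P' v u \<longleftrightarrow> v \<in> A \<union> M"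
    "same_cluster Q v u \<longleftrightarrow> v \<in> l" if "u \<in> M" for u v
    using moved[OF that] same_cluster_commute[of P v u] same_cluster_commute[of P' v u]
      same_cluster_commute[of Q v u] by simp_all
  note unmoved = same_cluster_move_unmoved[OF P AB M(1), folded P'_def]
  let ?E = "cc_errors X P Q" and ?E' = "cc_errors X P' Q" and ?Y = "X - M"
  have same: "?E - (M \<times> ?Y \<union> ?Y \<times> M) = ?E' - (M \<times> ?Y \<union> ?Y \<times> M)"
    unfolding cc_errors_def using moved M(1) X(4) unmoved by auto
  have blocks: "?E \<inter> M \<times> ?Y = M \<times> F" "?E \<inter> ?Y \<times> M = F \<times> M"
    "?E' \<inter> M \<times> ?Y = M \<times> F'" "?E' \<inter> ?Y \<times> M = F' \<times> M"
    unfolding cc_errors_def F_def F'_def using moved moved' X(4) by auto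
  have "card F' < card F"
    unfolding F_def F'_def
    using card_errors_move_less[OF \<open>finite X\<close> X(1-3) clustering_disjoint[OF P AB]
        clustering_nonempty[OF P AB(1)] M size eta] .
  then have "card ?E' < card ?E"
    using card_less_by_crossing_blocks[OF finite_cc_errors finite_cc_errors
        finite_subset[OF X(4)] \<open>M \<noteq> {}\<close> _ same blocks] \<open>finite X\<close> by blast
  then show ?thesis unfolding P'_def delta_cc_eq_card_cc_errors .
qed

lemma eta_ok_overlap:
  assumes "finite C" "C \<noteq> {}" "eta > 1/2" "eta_ok eta N C" "eta_ok eta N' C"
  shows "N \<inter> N' \<noteq> {}"
proof
  assume "N \<inter> N' = {}"
  then have "card (N \<inter> C) + card (N' \<inter> C) = card ((N \<inter> C) \<union> (N' \<inter> C))"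
    using assms(1) by (intro card_Un_disjoint[symmetric]) auto
  also have "\<dots> \<le> card C" using assms(1) by (intro card_mono) auto
  finally have "real (card (N \<inter> C)) + real (card (N' \<inter> C)) \<le> card C" by linarith
  moreover have "0 < (2 * eta - 1) * card C"
    using assms(1-3) by (simp add: card_gt_0_iff)
  then have "card C < 2 * (eta * card C)" by (simp add: algebra_simps)
  ultimately show False using assms(4,5) unfolding eta_ok_def by linarith
qed

section \<open>The average-linkage tree\<close>

lemma node_depth_less:
  assumes "finite (tree_nodes Ps)" "N \<in> tree_nodes Ps" "M \<subset> N"
  shows "node_depth Ps N < node_depth Ps M"
  unfolding node_depth_def using assms by (intro psubset_card_mono) auto

lemma tree_nodes_iff: "N \<in> tree_nodes Ps \<longleftrightarrow> (\<exists>i<length Ps. N \<in> Ps!i)"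
  unfolding tree_nodes_def by (auto simp: in_set_conv_nth) (use nth_mem in blast)

locale stable_linkage =
  fixes X :: "'a set" and S :: "'a \<Rightarrow> 'a \<Rightarrow> real" and Cstar :: "'a set set"
    and Ps :: "'a set set list"
  assumes finite_X: "finite X"
    and sym: "\<forall>x\<in>X. \<forall>y\<in>X. S x y = S y x"
    and target: "is_clustering X Cstar"
    and stable: "target_stable S Cstar"
    and run: "avg_linkage_run S X Ps"
begin

lemma length_pos: "0 < length Ps"
  and first_level: "Ps!0 = (\<lambda>x. {x}) ` X"
  and last_level: "Ps!(length Ps - 1) = {X}"
proof -
  have "Ps \<noteq> [] \<and> hd Ps = (\<lambda>x. {x}) ` X \<and> last Ps = {X}"
    using run unfolding avg_linkage_run_def by (elim conjE) (intro conjI)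
  then have "Ps \<noteq> []" "Ps!0 = (\<lambda>x. {x}) ` X" "last Ps = {X}"
    by (simp_all add: hd_conv_nth[symmetric])
  then show "0 < length Ps" "Ps!0 = (\<lambda>x. {x}) ` X" "Ps!(length Ps - 1) = {X}"
    by (simp_all add: last_conv_nth)
qed

lemma level_step:
  assumes "Suc i < length Ps"
  obtains N1 N2 where "N1 \<in> Ps!i" "N2 \<in> Ps!i" "N1 \<noteq> N2"
    "Ps!Suc i = insert (N1 \<union> N2) (Ps!i - {N1, N2})"
    "\<forall>M1\<in>Ps!i. \<forall>M2\<in>Ps!i. M1 \<noteq> M2 \<longrightarrow> avg_sim S M1 M2 \<le> avg_sim S N1 N2"
proof -
  have "\<forall>i. Suc i < length Ps \<longrightarrow> (\<exists>N1 N2. N1 \<in> Ps!i \<and> N2 \<in> Ps!i \<and> N1 \<noteq> N2 \<and>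
      Ps!Suc i = insert (N1 \<union> N2) (Ps!i - {N1, N2}) \<and>
      (\<forall>M1\<in>Ps!i. \<forall>M2\<in>Ps!i. M1 \<noteq> M2 \<longrightarrow> avg_sim S M1 M2 \<le> avg_sim S N1 N2))"
    using run unfolding avg_linkage_run_def by (elim conjE)
  with assms show thesis using that by (elim allE impE exE conjE) auto
qed

lemma laminar_merge:
  assumes P: "is_clustering X P" "\<forall>N\<in>P. laminar_wrt Cstar N"
    and N: "N1 \<in> P" "N2 \<in> P" "N1 \<noteq> N2"
    and max: "\<forall>M1\<in>P. \<forall>M2\<in>P. M1 \<noteq> M2 \<longrightarrow> avg_sim S M1 M2 \<le> avg_sim S N1 N2"
  shows "laminar_wrt Cstar (N1 \<union> N2)"
proof (rule ccontr)
  assume "\<not> ?thesis"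
  then obtain T where T: "T \<in> Cstar" "(N1 \<union> N2) \<inter> T \<noteq> {}" "\<not> N1 \<union> N2 \<subseteq> T" "\<not> T \<subseteq> N1 \<union> N2"
    unfolding laminar_wrt_def by blast
  have "N1 \<inter> T = {} \<or> N1 \<subseteq> T \<or> T \<subseteq> N1" "N2 \<inter> T = {} \<or> N2 \<subseteq> T \<or> T \<subseteq> N2"
    using P(2) N T(1) unfolding laminar_wrt_def by blast+
  then consider "N1 \<subset> T" "N2 \<inter> T = {}" | "N2 \<subset> T" "N1 \<inter> T = {}"
    using T by blast
  then show False
  proof cases
    case 1
    then obtain N where "N \<in> P" "N1 \<noteq> N" "avg_sim S N1 N2 < avg_sim S N1 N"
      using stable_better_partner[OF finite_X target stable P N(1,2) T(1)] by blast
    then show False using max N(1) by (meson not_le)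
  next
    case 2
    have "avg_sim S N1 N2 = avg_sim S N2 N1"
      using avg_sim_commute[OF sym] clustering_subset[OF P(1)] N by blast
    obtain N where "N \<in> P" "N2 \<noteq> N" "avg_sim S N2 N1 < avg_sim S N2 N"
      using stable_better_partner[OF finite_X target stable P N(2,1) T(1) 2] by blast
    then show False using max N(2) \<open>avg_sim S N1 N2 = avg_sim S N2 N1\<close> by (metis not_le)
  qed
qed

lemma level_clustering_laminar:
  "i < length Ps \<Longrightarrow> is_clustering X (Ps!i) \<and> (\<forall>N\<in>Ps!i. laminar_wrt Cstar N)"
proof (induction i)
  case 0
  then show ?case unfolding first_level is_clustering_def laminar_wrt_def by auto
next
  case (Suc i)
  then have IH: "is_clustering X (Ps!i)" "\<forall>N\<in>Ps!i. laminar_wrt Cstar N" by auto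
  obtain N1 N2 where N: "N1 \<in> Ps!i" "N2 \<in> Ps!i" "N1 \<noteq> N2"
    and eq: "Ps!Suc i = insert (N1 \<union> N2) (Ps!i - {N1, N2})"
    and max: "\<forall>M1\<in>Ps!i. \<forall>M2\<in>Ps!i. M1 \<noteq> M2 \<longrightarrow> avg_sim S M1 M2 \<le> avg_sim S N1 N2"
    by (metis level_step[OF Suc.prems])
  show ?case
    using clustering_merge[OF IH(1) N] laminar_merge[OF IH N max] IH(2) unfolding eq by blast
qed

lemma tree_nodeD:
  assumes "N \<in> tree_nodes Ps"
  shows tree_node_subset: "N \<subseteq> X" and tree_node_nonempty: "N \<noteq> {}"
    and tree_node_laminar: "laminar_wrt Cstar N"
proof -
  obtain i where i: "i < length Ps" "N \<in> Ps!i"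
    using assms unfolding tree_nodes_iff by (elim exE conjE)
  have cl: "is_clustering X (Ps!i)" and lam: "\<forall>N\<in>Ps!i. laminar_wrt Cstar N"
    using level_clustering_laminar[OF i(1)] by simp_all
  show "N \<subseteq> X" using clustering_subset[OF cl i(2)] .
  show "N \<noteq> {}" using clustering_nonempty[OF cl i(2)] .
  show "laminar_wrt Cstar N" using lam i(2) by simp
qed

lemma finite_tree_nodes: "finite (tree_nodes Ps)"
  by (rule finite_subset[of _ "Pow X"]) (use finite_X tree_node_subset in auto)

text \<open>Follow the node containing a fixed \<open>x \<in> T\<close> up the tree: by laminarity it stays inside
  \<open>T\<close> until it equals \<open>T\<close>, and the root is \<open>X\<close>.\<close>
lemma target_cluster_tree_node:
  assumes T: "T \<in> Cstar"
  shows "T \<in> tree_nodes Ps"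
proof (rule ccontr)
  assume notin: "T \<notin> tree_nodes Ps"
  obtain x where x: "x \<in> T" using clustering_nonempty[OF target T] by blast
  have TX: "T \<subseteq> X" using clustering_subset[OF target T] .
  have "\<exists>N\<in>Ps!i. x \<in> N \<and> N \<subseteq> T" if "i < length Ps" for i
    using that
  proof (induction i)
    case 0
    then show ?case using x TX unfolding first_level by auto
  next
    case (Suc i)
    then obtain N where N: "N \<in> Ps!i" "x \<in> N" "N \<subseteq> T" by auto
    have i: "i < length Ps" using Suc.prems by simp
    then have "N \<in> tree_nodes Ps" using N(1) unfolding tree_nodes_iff by blast
    then have "N \<noteq> T" using notin by blast
    obtain N1 N2 where N12: "N1 \<in> Ps!i" "N2 \<in> Ps!i" "N1 \<noteq> N2"
      and eq: "Ps!Suc i = insert (N1 \<union> N2) (Ps!i - {N1, N2})"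
      by (metis level_step[OF Suc.prems])
    have lev: "is_clustering X (Ps!i)" "\<forall>N\<in>Ps!i. laminar_wrt Cstar N"
      "\<forall>N\<in>Ps!Suc i. laminar_wrt Cstar N"
      using level_clustering_laminar[OF i] level_clustering_laminar[OF Suc.prems] by blast+
    show ?case
    proof (cases "N \<in> {N1, N2}")
      case False
      then show ?thesis using N unfolding eq by blast
    next
      case True
      then obtain N' where N': "N1 \<union> N2 = N \<union> N'" "N' \<in> Ps!i" "N' \<noteq> N"
        using N12 by (metis Un_commute insertE singletonD)
      have disj: "N \<inter> N' = {}" "N' \<noteq> {}"
        using clustering_disjoint[OF lev(1) N(1) N'(2)] clustering_nonempty[OF lev(1) N'(2)] N'(3)
        by auto
      have parent: "N \<union> N' \<in> Ps!Suc i" using N'(1) unfolding eq by simp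
      then have "laminar_wrt Cstar N'" "laminar_wrt Cstar (N \<union> N')"
        using lev(2,3) N'(2) by blast+
      then have "N' \<inter> T = {} \<or> N' \<subseteq> T \<or> T \<subseteq> N'"
        "(N \<union> N') \<inter> T = {} \<or> N \<union> N' \<subseteq> T \<or> T \<subseteq> N \<union> N'"
        using T unfolding laminar_wrt_def by blast+
      then have "N \<union> N' \<subseteq> T" using disj N(2,3) x \<open>N \<noteq> T\<close> by blast
      then show ?thesis using N(2) parent by blast
    qed
  qed
  from this[of "length Ps - 1"] have "T = X"
    using length_pos TX unfolding last_level by auto
  moreover have "X \<in> tree_nodes Ps"
    using length_pos last_level unfolding tree_nodes_iff by (metis diff_less insertI1 zero_less_one)
  ultimately show False using notin by simp
qed

lemma tree_children_nodes:
  assumes "tree_children Ps N N1 N2"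
  shows "N = N1 \<union> N2" "N1 \<inter> N2 = {}" "N1 \<in> tree_nodes Ps" "N2 \<in> tree_nodes Ps"
proof -
  obtain i where i: "Suc i < length Ps" and N: "N1 \<in> Ps!i" "N2 \<in> Ps!i" "N1 \<noteq> N2"
    and "N = N1 \<union> N2"
    using assms unfolding tree_children_def by blast
  then show "N = N1 \<union> N2" by simp
  have "is_clustering X (Ps!i)" using level_clustering_laminar i by simp
  then show "N1 \<inter> N2 = {}" using clustering_disjoint N by blast
  show "N1 \<in> tree_nodes Ps" "N2 \<in> tree_nodes Ps"
    using i N unfolding tree_nodes_iff by (meson Suc_lessD)+
qed

lemma deepest_containing_meets_children:
  assumes deep: "deepest_containing Ps C N" and children: "tree_children Ps N N1 N2"
  shows "C \<inter> N1 \<noteq> {}" "C \<inter> N2 \<noteq> {}"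
proof -
  note N = tree_children_nodes[OF children]
  have N_node: "N \<in> tree_nodes Ps" and CN: "C \<subseteq> N"
    and deepest: "\<And>M. M \<in> tree_nodes Ps \<Longrightarrow> C \<subseteq> M \<Longrightarrow> node_depth Ps M \<le> node_depth Ps N"
    using deep unfolding deepest_containing_def by auto
  have "\<not> C \<subseteq> M" if "M \<in> tree_nodes Ps" "M \<subset> N" for M
    using deepest[OF that(1)] node_depth_less[OF finite_tree_nodes N_node that(2)] by fastforce
  moreover have "N1 \<subset> N" "N2 \<subset> N"
    using N tree_node_nonempty by blast+
  ultimately show "C \<inter> N1 \<noteq> {}" "C \<inter> N2 \<noteq> {}"
    using N(1,3,4) CN by blast+
qed

text \<open>A target cluster meeting both children contains them both, hence contains \<open>C\<close>.\<close>
lemma deepest_children_separated: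
  assumes deep: "deepest_containing Ps C N" and children: "tree_children Ps N N1 N2"
    and impure: "\<exists>l1\<in>Cstar. \<exists>l2\<in>Cstar. l1 \<noteq> l2 \<and> C \<inter> l1 \<noteq> {} \<and> C \<inter> l2 \<noteq> {}"
  shows "\<forall>u\<in>C \<inter> N1. \<forall>v\<in>C \<inter> N2. \<not> same_cluster Cstar u v"
proof (intro ballI notI)
  fix u v assume uv: "u \<in> C \<inter> N1" "v \<in> C \<inter> N2" "same_cluster Cstar u v"
  then obtain T where T: "T \<in> Cstar" "u \<in> T" "v \<in> T" unfolding same_cluster_def by blast
  note N = tree_children_nodes[OF children]
  have "N1 \<inter> T = {} \<or> N1 \<subseteq> T \<or> T \<subseteq> N1" "N2 \<inter> T = {} \<or> N2 \<subseteq> T \<or> T \<subseteq> N2"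
    using tree_node_laminar[OF N(3)] tree_node_laminar[OF N(4)] T(1) unfolding laminar_wrt_def by blast+
  then have "N1 \<subseteq> T" "N2 \<subseteq> T" using uv T N(2) by blast+
  then have "C \<subseteq> T" using deep N(1) unfolding deepest_containing_def by blast
  then show False
    using impure clustering_disjoint[OF target T(1)] by blast
qed

lemma split_step_less:
  assumes P: "is_clustering X P" and split: "split_step Ps Cstar P P'"
  shows "is_clustering X P' \<and> delta_cc X P' Cstar < delta_cc X P Cstar"
proof -
  obtain C N N1 N2 where C: "C \<in> P"
    and impure: "\<exists>l1\<in>Cstar. \<exists>l2\<in>Cstar. l1 \<noteq> l2 \<and> C \<inter> l1 \<noteq> {} \<and> C \<inter> l2 \<noteq> {}"
    and deep: "deepest_containing Ps C N" and children: "tree_children Ps N N1 N2"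
    and P': "P' = (P - {C}) \<union> ({C \<inter> N1, C \<inter> N2} - {{}})"
    using split unfolding split_step_def by blast
  note N = tree_children_nodes[OF children]
  note meets = deepest_containing_meets_children[OF deep children]
  have cut: "(C \<inter> N1) \<union> (C \<inter> N2) = C" "(C \<inter> N1) \<inter> (C \<inter> N2) = {}"
    using deep N(1,2) unfolding deepest_containing_def by blast+
  have "P' = insert (C \<inter> N1) (insert (C \<inter> N2) (P - {C}))"
    using P' meets by blast
  then show ?thesis
    using clustering_split[OF P C cut meets] deepest_children_separated[OF deep children impure]
      delta_cc_split_less[OF finite_X P C cut meets] by simp
qed

text \<open>The deepest node \<open>\<eta>\<close>-overlapping both clusters cannot properly contain the common target
  cluster \<open>l\<close>, which is itself a deeper such node.\<close>
lemma merge_node_subset_target: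
  assumes P: "is_clustering X P" "Ci \<in> P" and eta: "eta > 1/2"
    and l: "l \<in> Cstar" "eta_ok eta l Ci" "eta_ok eta l Cj"
    and N: "N \<in> tree_nodes Ps" "eta_ok eta N Ci"
    and deepest: "\<forall>M\<in>tree_nodes Ps. eta_ok eta M Ci \<and> eta_ok eta M Cj \<longrightarrow>
        node_depth Ps M \<le> node_depth Ps N"
  shows "N \<subseteq> l"
proof -
  have "N \<inter> l \<noteq> {}"
    using eta_ok_overlap[OF finite_cluster[OF finite_X P] clustering_nonempty[OF P] eta N(2) l(2)] .
  moreover have "N \<inter> l = {} \<or> N \<subseteq> l \<or> l \<subseteq> N"
    using tree_node_laminar[OF N(1)] l(1) unfolding laminar_wrt_def by blast
  moreover have "\<not> l \<subset> N"
  proof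
    assume "l \<subset> N"
    then have "node_depth Ps N < node_depth Ps l"
      using node_depth_less[OF finite_tree_nodes N(1)] by blast
    moreover have "node_depth Ps l \<le> node_depth Ps N"
      using deepest target_cluster_tree_node[OF l(1)] l(2,3) by blast
    ultimately show False by simp
  qed
  ultimately show ?thesis by blast
qed

lemma merge_step_less:
  assumes P: "is_clustering X P" and eta: "eta > 2/3" and merge: "merge_step eta Ps Cstar P P'"
  shows "is_clustering X P' \<and> delta_cc X P' Cstar < delta_cc X P Cstar"
proof -
  obtain Ci Cj l N where C: "Ci \<in> P" "Cj \<in> P" "Ci \<noteq> Cj"
    and l: "l \<in> Cstar" "eta_ok eta l Ci" "eta_ok eta l Cj"
    and N: "N \<in> tree_nodes Ps" "eta_ok eta N Ci" "eta_ok eta N Cj"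
    and deepest: "\<forall>M\<in>tree_nodes Ps. eta_ok eta M Ci \<and> eta_ok eta M Cj \<longrightarrow>
        node_depth Ps M \<le> node_depth Ps N"
    and P': "P' = (if card Ci \<ge> card Cj
              then (P - {Ci, Cj}) \<union> ({Ci \<union> (N \<inter> Cj), Cj - N} - {{}})
              else (P - {Ci, Cj}) \<union> ({Ci - N, Cj \<union> (N \<inter> Ci)} - {{}}))"
    using merge unfolding merge_step_def by (elim bexE exE conjE) blast
  have Nl: "N \<subseteq> l" using merge_node_subset_target[OF P C(1) _ l N(1,2) deepest] eta by simp
  have move: "is_clustering X ((P - {A, B}) \<union> ({A \<union> (N \<inter> B), B - N} - {{}})) \<and>
      delta_cc X ((P - {A, B}) \<union> ({A \<union> (N \<inter> B), B - N} - {{}})) Cstar < delta_cc X P Cstar"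
    if AB: "A \<in> P" "B \<in> P" "A \<noteq> B" "card B \<le> card A" and "eta_ok eta l A" "eta_ok eta N B" for A B
  proof -
    have "B - N = B - N \<inter> B" by blast
    moreover have "eta_ok eta (N \<inter> B) B" using that(6) unfolding eta_ok_def by (simp add: Int_assoc)
    ultimately show ?thesis
      using clustering_move[OF P AB(1-3), of "N \<inter> B"]
        delta_cc_move_less[OF finite_X target P AB l(1) _ _ eta that(5), of "N \<inter> B"] Nl
      by (auto simp: Int_commute)
  qed
  show ?thesis
  proof (cases "card Cj \<le> card Ci")
    case True
    then show ?thesis using move[OF C True l(2) N(3)] P' by simp
  next
    case False
    then have "P' = (P - {Cj, Ci}) \<union> ({Cj \<union> (N \<inter> Ci), Ci - N} - {{}})"
      using P' by (simp add: insert_commute)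
    then show ?thesis using move[OF C(2,1) C(3)[symmetric] _ l(3) N(2)] False by simp
  qed
qed

end

section \<open>Counting requests\<close>

lemma chain_length_le_measure:
  fixes f :: "'a \<Rightarrow> nat"
  assumes "xs \<noteq> []" "I (hd xs)" "\<forall>t. Suc t < length xs \<longrightarrow> R (xs!t) (xs!Suc t)"
    and step: "\<And>x y. I x \<Longrightarrow> R x y \<Longrightarrow> I y \<and> f y < f x"
  shows "length xs - 1 \<le> f (hd xs)"
proof -
  have "I (xs!t) \<and> f (xs!t) + t \<le> f (hd xs)" if "t < length xs" for t
    using that
  proof (induction t)
    case 0
    then show ?case using assms(1,2) by (simp add: hd_conv_nth)
  next
    case (Suc t)
    then show ?case using step[of "xs!t" "xs!Suc t"] assms(3) by fastforce
  qed
  from this[of "length xs - 1"] show ?thesis using assms(1) by simp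
qed

theorem theorem15:
  fixes X :: "'a set" and S :: "'a \<Rightarrow> 'a \<Rightarrow> real"
    and Cstar C0 :: "'a set set" and Ps :: "'a set set list"
    and eta :: real and Cs :: "'a set set list"
  assumes "finite X"
    and "\<forall>x\<in>X. \<forall>y\<in>X. S x y = S y x"
    and "is_clustering X Cstar"
    and "target_stable S Cstar"
    and "is_clustering X C0"
    and "avg_linkage_run S X Ps"
    and "eta > 2/3"
    and "Cs \<noteq> []" and "hd Cs = C0"
    and "\<forall>t. Suc t < length Cs \<longrightarrow> edit_step eta Ps Cstar (Cs!t) (Cs!Suc t)"
    and "\<forall>t. Suc t < length Cs \<longrightarrow> Cs!t \<noteq> Cstar"
  shows "length Cs - 1 \<le> delta_cc X C0 Cstar"
proof -
  interpret stable_linkage X S Cstar Ps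
    using assms(1-4,6) by unfold_locales
  have "is_clustering X P' \<and> delta_cc X P' Cstar < delta_cc X P Cstar"
    if "is_clustering X P" "edit_step eta Ps Cstar P P'" for P P'
    using that split_step_less merge_step_less[OF _ assms(7)] unfolding edit_step_def by blast
  then show ?thesis
    using chain_length_le_measure[of Cs "is_clustering X" "edit_step eta Ps Cstar"
        "\<lambda>P. delta_cc X P Cstar"] assms(5,8-10) by blast
qed

end
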